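(* Let $S$ be a numerical semigroup. If $\mathrm{Ap}(S)$ is $\alpha$-rectangular then it is $\beta$-rectangular, and if it is $\beta$-rectangular then it is $\gamma$-rectangular. Both implications are strict: $S=\langle 8,10,15\rangle$ has $\beta$-rectangular but not $\alpha$-rectangular Apéry set, and $S=\langle 8,10,11,12\rangle$ has $\gamma$-rectangular but not $\beta$-rectangular Apéry set.
   Context: A numerical semigroup is a submonoid $S$ of $(\mathbb N,+)$ with finite complement in $\mathbb N$; $g_1<\dots<g_\nu$ is its minimal system of generators, $m=g_1$, and $\mathrm{Ap}(S)=\{s\in S: s-m\notin S\}$. A representation of $s\in S$ is an expression $s=\sum_{i=1}^\nu\lambda_ig_i$, $\lambda_i\in\mathbb N$; $\mathrm{ord}(s)$ is the maximum of $\sum\lambda_i$ over all representations; a representation is maximal if $\sum\lambda_i=\mathrm{ord}(s)$. For $i=2,\dots,\nu$: $\alpha_i=\max\{h: hg_i\in\mathrm{Ap}(S)\}$; $\beta_i=\max\{h: hg_i\in\mathrm{Ap}(S),\ \mathrm{ord}(hg_i)=h\}$; $\gamma_i=\max\{h: hg_i\in\mathrm{Ap}(S),\ \mathrm{ord}(hg_i)=h,\ hg_i\text{ has a unique maximal representation}\}$ (all $h\in\mathbb N$). For $\delta\in\{\alpha,\beta,\gamma\}$, $\mathrm{Ap}(S)$ is $\delta$-rectangular if $\mathrm{Ap}(S)=\{\sum_{i=2}^\nu\lambda_ig_i: 0\le\lambda_i\le\delta_i\}$. *)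

theory Defs
  imports Main
begin

definition numerical_semigroup :: "nat set \<Rightarrow> bool" where
  "numerical_semigroup S \<longleftrightarrow> 0 \<in> S \<and> (\<forall>a\<in>S. \<forall>b\<in>S. a + b \<in> S) \<and> finite (UNIV - S)"

definition gen :: "nat set \<Rightarrow> nat set" where
  "gen A = {\<Sum>a\<in>A. l a * a | l. True}"

definition mingens :: "nat set \<Rightarrow> nat set" where
  "mingens S = {g \<in> S. g \<noteq> 0 \<and> \<not> (\<exists>a\<in>S. \<exists>b\<in>S. a \<noteq> 0 \<and> b \<noteq> 0 \<and> g = a + b)}"

text \<open>Multiplicity m = g_1 (smallest generator = smallest nonzero element).\<close>
definition mult :: "nat set \<Rightarrow> nat" where
  "mult S = Min (mingens S)"

definition apery :: "nat set \<Rightarrow> nat set" where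
  "apery S = {s \<in> S. \<not> (\<exists>t\<in>S. s = t + mult S)}"

definition reps :: "nat set \<Rightarrow> nat \<Rightarrow> (nat \<Rightarrow> nat) set" where
  "reps S s = {l. (\<forall>x. x \<notin> mingens S \<longrightarrow> l x = 0) \<and> (\<Sum>g\<in>mingens S. l g * g) = s}"

definition ord :: "nat set \<Rightarrow> nat \<Rightarrow> nat" where
  "ord S s = Max ((\<lambda>l. \<Sum>g\<in>mingens S. l g) ` reps S s)"

definition maxreps :: "nat set \<Rightarrow> nat \<Rightarrow> (nat \<Rightarrow> nat) set" where
  "maxreps S s = {l \<in> reps S s. (\<Sum>g\<in>mingens S. l g) = ord S s}"

definition alpha :: "nat set \<Rightarrow> nat \<Rightarrow> nat" where
  "alpha S g = Max {h. h * g \<in> apery S}"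

definition beta :: "nat set \<Rightarrow> nat \<Rightarrow> nat" where
  "beta S g = Max {h. h * g \<in> apery S \<and> ord S (h * g) = h}"

definition gamma :: "nat set \<Rightarrow> nat \<Rightarrow> nat" where
  "gamma S g = Max {h. h * g \<in> apery S \<and> ord S (h * g) = h \<and> (\<exists>!l. l \<in> maxreps S (h * g))}"

definition rectangular :: "(nat set \<Rightarrow> nat \<Rightarrow> nat) \<Rightarrow> nat set \<Rightarrow> bool" where
  "rectangular \<delta> S \<longleftrightarrow> apery S =
     {\<Sum>g\<in>mingens S - {mult S}. l g * g | l. \<forall>g\<in>mingens S - {mult S}. l g \<le> \<delta> S g}"

end

theory Submission
  imports Defs
begin

text \<open>Let \<open>m\<close> be the multiplicity and \<open>G\<close> the remaining minimal generators. Lowering coefficients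
  of a representation of an Apery element gives again an Apery element, so representations of Apery
  elements never use \<open>m\<close>, their coefficients are bounded by \<open>alpha\<close>, and (by an exchange argument)
  the coefficients of maximal ones are bounded by \<open>beta\<close>. If \<open>Ap(S)\<close> is \<open>alpha\<close>-rectangular, its
  corner \<open>\<Sum>g\<in>G. alpha g * g\<close> is an Apery element; padding a maximal representation of
  \<open>h * g \<in> Ap(S)\<close> with the rest of the corner yields a representation of the corner, and the
  bounds force it to use only \<open>g\<close>, so \<open>ord (h * g) = h\<close> and \<open>beta = alpha\<close>. If \<open>Ap(S)\<close> is
  \<open>beta\<close>-rectangular, the corner has order \<open>\<Sum>g\<in>G. beta g\<close>, so the same padding of any maximal
  representation of \<open>beta g * g\<close> is maximal; the bounds make it unique, so \<open>gamma = beta\<close>.\<close>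

lemma sum_single_coeff [simp]:
  fixes k :: nat
  assumes "finite A" "k \<in> A"
  shows "(\<Sum>x\<in>A. (if x = k then h else 0) * x) = h * k"
proof -
  have "(\<Sum>x\<in>A. (if x = k then h else 0) * x) = (\<Sum>x\<in>A. if x = k then h * k else 0)"
    by (rule sum.cong) auto
  with assms show ?thesis by simp
qed

lemma sum_eq_single_support:
  fixes f :: "'a \<Rightarrow> nat"
  assumes "finite A" "a \<in> A" "\<forall>x. x \<noteq> a \<longrightarrow> f x = 0"
  shows "sum f A = f a"
proof -
  have "sum f (A - {a}) = 0"
    using assms(3) by (intro sum.neutral) blast
  then show ?thesis
    using sum.remove[OF assms(1,2), of f] by simp
qed

lemma sum_update_diff:
  fixes l w :: "'a \<Rightarrow> nat"
  assumes "finite A" "a \<in> A" "h \<le> l a"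
  shows "(\<Sum>b\<in>A. (l(a := l a - h)) b * w b) + h * w a = (\<Sum>b\<in>A. l b * w b)"
proof -
  have "(\<Sum>b\<in>A - {a}. (l(a := l a - h)) b * w b) = (\<Sum>b\<in>A - {a}. l b * w b)"
    by (intro sum.cong) auto
  moreover have "(l a - h) * w a + h * w a = l a * w a"
    using assms(3) by (simp add: add_mult_distrib[symmetric])
  ultimately show ?thesis
    using sum.remove[OF assms(1,2), of "\<lambda>b. (l(a := l a - h)) b * w b"]
      sum.remove[OF assms(1,2), of "\<lambda>b. l b * w b"] by simp
qed

definition box :: "nat set \<Rightarrow> (nat \<Rightarrow> nat) \<Rightarrow> nat set" where
  "box G b = {\<Sum>g\<in>G. l g * g | l. \<forall>g\<in>G. l g \<le> b g}"

lemma rectangular_iff_box: "rectangular \<delta> S \<longleftrightarrow> apery S = box (mingens S - {mult S}) (\<delta> S)"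
  by (simp add: rectangular_def box_def)

lemma corner_in_box: "(\<Sum>g\<in>G. b g * g) \<in> box G b"
  by (auto simp: box_def)

lemma box_empty: "box {} b = {0}"
  by (simp add: box_def)

lemma box_insert:
  assumes G: "finite G" "g \<notin> G"
  shows "box (insert g G) b = (\<Union>i\<le>b g. (+) (i * g) ` box G b)"
proof (intro equalityI subsetI)
  fix x assume "x \<in> box (insert g G) b"
  then obtain l where l: "x = (\<Sum>h\<in>insert g G. l h * h)" "\<forall>h\<in>insert g G. l h \<le> b h"
    by (auto simp: box_def)
  then have "(\<Sum>h\<in>G. l h * h) \<in> box G b"
    by (auto simp: box_def)
  moreover have "x = l g * g + (\<Sum>h\<in>G. l h * h)"
    using l(1) G by simp
  ultimately show "x \<in> (\<Union>i\<le>b g. (+) (i * g) ` box G b)"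
    using l(2) by blast
next
  fix x assume "x \<in> (\<Union>i\<le>b g. (+) (i * g) ` box G b)"
  then obtain i l where il: "i \<le> b g" "\<forall>h\<in>G. l h \<le> b h" "x = i * g + (\<Sum>h\<in>G. l h * h)"
    by (auto simp: box_def)
  have "(\<Sum>h\<in>G. (l(g := i)) h * h) = (\<Sum>h\<in>G. l h * h)"
    using G(2) by (intro sum.cong) auto
  with il G have "x = (\<Sum>h\<in>insert g G. (l(g := i)) h * h) \<and> (\<forall>h\<in>insert g G. (l(g := i)) h \<le> b h)"
    by simp
  then show "x \<in> box (insert g G) b"
    unfolding box_def by blast
qed

lemma box_mono: "(\<And>g. g \<in> G \<Longrightarrow> b g \<le> b' g) \<Longrightarrow> box G b \<subseteq> box G b'"
  by (force simp: box_def)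

lemma box_cong: "(\<And>g. g \<in> G \<Longrightarrow> b g = b' g) \<Longrightarrow> box G b = box G b'"
  by (simp add: box_def)

lemma apery_iff: "x \<in> apery S \<longleftrightarrow> x \<in> S \<and> (mult S \<le> x \<longrightarrow> x - mult S \<notin> S)"
proof -
  have "(\<exists>t\<in>S. x = t + mult S) \<longleftrightarrow> mult S \<le> x \<and> x - mult S \<in> S"
    by force
  then show ?thesis
    unfolding apery_def by blast
qed

section \<open>Representations, order and the Apery set\<close>

locale num_semigroup =
  fixes S :: "nat set"
  assumes numerical_semigroup: "numerical_semigroup S"
begin

lemma zero_mem: "0 \<in> S"
  using numerical_semigroup by (simp add: numerical_semigroup_def)

lemma add_mem: "a \<in> S \<Longrightarrow> b \<in> S \<Longrightarrow> a + b \<in> S"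
  using numerical_semigroup by (simp add: numerical_semigroup_def)

lemma conductor_exists: "\<exists>c. \<forall>n\<ge>c. n \<in> S"
proof -
  have "finite (UNIV - S)"
    using numerical_semigroup by (simp add: numerical_semigroup_def)
  then obtain c where "UNIV - S \<subseteq> {..<c}"
    by (auto simp: finite_nat_set_iff_bounded)
  then have "\<forall>n\<ge>c. n \<in> S" by auto
  then show ?thesis ..
qed

lemma multiple_mem: "a \<in> S \<Longrightarrow> k * a \<in> S"
  by (induction k) (simp_all add: zero_mem add_mem)

lemma sum_mem: "finite A \<Longrightarrow> A \<subseteq> S \<Longrightarrow> (\<Sum>a\<in>A. l a * a) \<in> S"
  by (induction A rule: finite_induct) (simp_all add: zero_mem add_mem multiple_mem)

lemma mingens_subset: "mingens S \<subseteq> S"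
  by (auto simp: mingens_def)

lemma mingens_pos: "g \<in> mingens S \<Longrightarrow> 0 < g"
  by (auto simp: mingens_def)

text \<open>Generators above twice the conductor split as a sum of two nonzero elements.\<close>
lemma finite_mingens: "finite (mingens S)"
proof -
  obtain c where c: "\<forall>n\<ge>c. n \<in> S"
    using conductor_exists by blast
  have "mingens S \<subseteq> {..2 * Suc c}"
  proof
    fix g assume g: "g \<in> mingens S"
    show "g \<in> {..2 * Suc c}"
    proof (rule ccontr)
      assume "g \<notin> {..2 * Suc c}"
      then have "Suc c \<in> S" "g - Suc c \<in> S" "g = Suc c + (g - Suc c)" "g - Suc c \<noteq> 0"
        using c by auto
      with g show False
        unfolding mingens_def by blast
    qed
  qed
  then show ?thesis
    using finite_subset by blast
qed

lemma least_nonzero_in_mingens: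
  "(LEAST s. s \<in> S \<and> s \<noteq> 0) \<in> mingens S"
proof -
  obtain c where "\<forall>n\<ge>c. n \<in> S"
    using conductor_exists by blast
  then have ex: "Suc c \<in> S \<and> Suc c \<noteq> 0" by simp
  define s where "s = (LEAST s. s \<in> S \<and> s \<noteq> 0)"
  have s: "s \<in> S" "s \<noteq> 0"
    using LeastI[of "\<lambda>s. s \<in> S \<and> s \<noteq> 0", OF ex] by (simp_all add: s_def)
  have "\<not> (\<exists>a\<in>S. \<exists>b\<in>S. a \<noteq> 0 \<and> b \<noteq> 0 \<and> s = a + b)"
  proof
    assume "\<exists>a\<in>S. \<exists>b\<in>S. a \<noteq> 0 \<and> b \<noteq> 0 \<and> s = a + b"
    then obtain a b where "a \<in> S" "a \<noteq> 0" "b \<noteq> 0" "s = a + b"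
      by blast
    moreover from \<open>a \<in> S\<close> \<open>a \<noteq> 0\<close> have "s \<le> a"
      unfolding s_def by (simp add: Least_le)
    ultimately show False by simp
  qed
  with s show ?thesis
    by (simp add: mingens_def s_def)
qed

lemma mult_mingens: "mult S \<in> mingens S"
  unfolding mult_def using finite_mingens least_nonzero_in_mingens by (auto intro: Min_in)

lemma mult_le: "g \<in> mingens S \<Longrightarrow> mult S \<le> g"
  unfolding mult_def using finite_mingens by simp

lemma mult_pos: "0 < mult S"
  using mingens_pos mult_mingens by blast

lemma mult_mem: "mult S \<in> S"
  using mingens_subset mult_mingens by blast

lemma rep_mem: "l \<in> reps S s \<Longrightarrow> s \<in> S"
  unfolding reps_def using sum_mem[OF finite_mingens mingens_subset] by auto

lemma single_rep: "g \<in> mingens S \<Longrightarrow> (\<lambda>_. 0)(g := h) \<in> reps S (h * g)"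
  unfolding reps_def using finite_mingens by auto

lemma reps_add: "l \<in> reps S a \<Longrightarrow> l' \<in> reps S b \<Longrightarrow> (\<lambda>x. l x + l' x) \<in> reps S (a + b)"
  by (simp add: reps_def add_mult_distrib sum.distrib)

lemma reps_decrease_coeff:
  assumes c: "c \<in> reps S x" and k: "k \<in> mingens S" and h: "h \<le> c k"
  shows "c(k := c k - h) \<in> reps S (x - h * k)"
    and "h * k \<le> x"
    and "(\<Sum>y\<in>mingens S. (c(k := c k - h)) y) + h = (\<Sum>y\<in>mingens S. c y)"
proof -
  have "(\<Sum>y\<in>mingens S. (c(k := c k - h)) y * y) + h * k = (\<Sum>y\<in>mingens S. c y * y)"
    using sum_update_diff[where l = c and w = "\<lambda>y. y", OF finite_mingens k h] by simp
  with c k show "c(k := c k - h) \<in> reps S (x - h * k)" "h * k \<le> x"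
    by (auto simp: reps_def)
  show "(\<Sum>y\<in>mingens S. (c(k := c k - h)) y) + h = (\<Sum>y\<in>mingens S. c y)"
    using sum_update_diff[where l = c and w = "\<lambda>_. 1", OF finite_mingens k h] by simp
qed

lemma rep_exchange:
  assumes c: "c \<in> reps S x" and k: "k \<in> mingens S" and h: "h \<le> c k" and l: "l \<in> reps S (h * k)"
  shows "(\<lambda>y. l y + (c(k := c k - h)) y) \<in> reps S x"
    and "(\<Sum>y\<in>mingens S. l y + (c(k := c k - h)) y) + h = (\<Sum>y\<in>mingens S. l y) + (\<Sum>y\<in>mingens S. c y)"
  using reps_add[OF l reps_decrease_coeff(1)[OF c k h]] reps_decrease_coeff(2,3)[OF c k h]
  by (simp_all add: sum.distrib)

lemma reps_nonempty: "s \<in> S \<Longrightarrow> reps S s \<noteq> {}"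
proof (induction s rule: less_induct)
  case (less s)
  consider "s = 0" | "s \<in> mingens S" | a b where "a \<in> S" "b \<in> S" "a \<noteq> 0" "b \<noteq> 0" "s = a + b"
    using less.prems by (auto simp: mingens_def)
  then show ?case
  proof cases
    case 1
    then have "(\<lambda>_. 0) \<in> reps S s" by (simp add: reps_def)
    then show ?thesis by blast
  next
    case 2
    then show ?thesis using single_rep[of s 1] by auto
  next
    case 3
    then obtain la lb where "la \<in> reps S a" "lb \<in> reps S b"
      using less.IH by fastforce
    with 3 have "(\<lambda>x. la x + lb x) \<in> reps S s"
      by (simp add: reps_add)
    then show ?thesis by blast
  qed
qed

lemma finite_reps: "finite (reps S s)"
proof -
  have "l x \<le> s" if "l \<in> reps S s" "x \<in> mingens S" for l x
  proof -
    have "l x * x \<le> (\<Sum>g\<in>mingens S. l g * g)"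
      using that finite_mingens by (intro member_le_sum) auto
    moreover have "l x \<le> l x * x"
      using mingens_pos[OF that(2)] by simp
    moreover have "(\<Sum>g\<in>mingens S. l g * g) = s"
      using that(1) by (simp add: reps_def)
    ultimately show ?thesis by linarith
  qed
  then have "reps S s \<subseteq> {l. \<forall>x. (x \<in> mingens S \<longrightarrow> l x \<in> {..s}) \<and> (x \<notin> mingens S \<longrightarrow> l x = 0)}"
    by (auto simp: reps_def)
  then show ?thesis
    using finite_set_of_finite_funs[OF finite_mingens, of "{..s}" 0] finite_subset by blast
qed

lemma size_le_ord: "l \<in> reps S s \<Longrightarrow> (\<Sum>g\<in>mingens S. l g) \<le> ord S s"
  unfolding ord_def using finite_reps by simp

lemma maxreps_nonempty: "s \<in> S \<Longrightarrow> maxreps S s \<noteq> {}"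
proof -
  assume "s \<in> S"
  then have "ord S s \<in> (\<lambda>l. \<Sum>g\<in>mingens S. l g) ` reps S s"
    unfolding ord_def using finite_reps reps_nonempty by (intro Max_in) auto
  then show ?thesis
    by (auto simp: maxreps_def)
qed

lemma le_ord_multiple: "g \<in> mingens S \<Longrightarrow> h \<le> ord S (h * g)"
  using size_le_ord[OF single_rep, of g h] finite_mingens by simp

lemma reps_zero: "reps S 0 = {\<lambda>_. 0}"
proof (intro equalityI subsetI)
  fix l assume l: "l \<in> reps S 0"
  have "l g = 0" for g
  proof (cases "g \<in> mingens S")
    case True
    then have "l g * g = 0"
      using l finite_mingens by (simp add: reps_def)
    with mingens_pos[OF True] show ?thesis
      by simp
  next
    case False
    with l show ?thesis
      by (simp add: reps_def)
  qed
  then show "l \<in> {\<lambda>_. 0}"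
    by auto
qed (simp add: reps_def)

lemma reps_mingens:
  assumes g: "g \<in> mingens S"
  shows "reps S g = {(\<lambda>_. 0)(g := 1)}"
proof (intro equalityI subsetI)
  fix l assume l: "l \<in> reps S g"
  have "(\<Sum>k\<in>mingens S. l k * k) \<noteq> 0"
    using l mingens_pos[OF g] by (simp add: reps_def)
  then obtain k where k: "k \<in> mingens S" "l k * k \<noteq> 0"
    by (rule sum.not_neutral_contains_not_neutral)
  then have "1 \<le> l k"
    by simp
  note l' = reps_decrease_coeff[OF l k(1) this]
  have "g - k \<in> S" "k \<in> S" "k \<noteq> 0" "g = k + (g - k)"
    using rep_mem[OF l'(1)] k(1) mingens_subset mingens_pos l'(2) by auto
  then have "g - k = 0"
    using g unfolding mingens_def by blast
  with l'(2) have "k = g"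
    by simp
  with l'(1) \<open>1 \<le> l k\<close> have "l(g := l g - 1) = (\<lambda>_. 0)" "1 \<le> l g"
    using reps_zero by simp_all
  then have upd: "(l(g := l g - 1)) x = 0" for x
    by simp
  have "l x = ((\<lambda>_. 0)(g := 1)) x" for x
    using upd[of x] \<open>1 \<le> l g\<close> by (cases "x = g") simp_all
  then show "l \<in> {(\<lambda>_. 0)(g := 1)}"
    by auto
qed (use single_rep[OF g, of 1] in simp)

lemma ord_mingens: "g \<in> mingens S \<Longrightarrow> ord S g = 1"
  using finite_mingens by (simp add: ord_def reps_mingens)

lemma maxreps_mingens: "g \<in> mingens S \<Longrightarrow> maxreps S g = {(\<lambda>_. 0)(g := 1)}"
  using finite_mingens by (auto simp: maxreps_def reps_mingens ord_mingens)

lemma rep_size_times_le: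
  assumes l: "l \<in> reps S s" and b: "\<forall>g\<in>mingens S. 0 < l g \<longrightarrow> b \<le> g"
  shows "(\<Sum>g\<in>mingens S. l g) * b \<le> s"
proof -
  have "(\<Sum>g\<in>mingens S. l g) * b = (\<Sum>g\<in>mingens S. l g * b)"
    by (simp add: sum_distrib_right)
  also have "\<dots> \<le> (\<Sum>g\<in>mingens S. l g * g)"
  proof (rule sum_mono)
    fix g assume "g \<in> mingens S"
    with b show "l g * b \<le> l g * g"
      by (cases "l g = 0") simp_all
  qed
  finally show ?thesis
    using l by (simp add: reps_def)
qed

lemma ord_times_le:
  assumes s: "s \<in> S" and b: "\<And>l g. l \<in> reps S s \<Longrightarrow> g \<in> mingens S \<Longrightarrow> 0 < l g \<Longrightarrow> b \<le> g"
  shows "ord S s * b \<le> s"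
proof -
  obtain l where "l \<in> maxreps S s"
    using maxreps_nonempty[OF s] by blast
  then have l: "l \<in> reps S s" "(\<Sum>g\<in>mingens S. l g) = ord S s"
    by (simp_all add: maxreps_def)
  have "(\<Sum>g\<in>mingens S. l g) * b \<le> s"
    using l(1) b by (intro rep_size_times_le) auto
  with l(2) show ?thesis
    by simp
qed

lemma ord_times_mult_le: "s \<in> S \<Longrightarrow> ord S s * mult S \<le> s"
  using ord_times_le mult_le by blast

lemma apery_less: "\<forall>n\<ge>c. n \<in> S \<Longrightarrow> x \<in> apery S \<Longrightarrow> x < c + mult S"
proof (rule ccontr)
  assume c: "\<forall>n\<ge>c. n \<in> S" and x: "x \<in> apery S" and "\<not> x < c + mult S"
  then have "mult S \<le> x" "x - mult S \<in> S"
    by auto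
  with x show False
    by (simp add: apery_iff)
qed

lemma finite_apery: "finite (apery S)"
proof -
  obtain c where "\<forall>n\<ge>c. n \<in> S"
    using conductor_exists by blast
  then have "apery S \<subseteq> {..<c + mult S}"
    using apery_less by blast
  then show ?thesis
    using finite_subset by blast
qed

lemma apery_eqI:
  assumes c: "\<forall>n\<ge>c. n \<in> S" and A: "A \<subseteq> {..<c + mult S}"
    and below: "\<forall>x\<in>{..<c + mult S}. (x \<in> S \<and> (mult S \<le> x \<longrightarrow> x - mult S \<notin> S)) \<longleftrightarrow> x \<in> A"
  shows "apery S = A"
  using apery_less[OF c] A below by (auto simp: apery_iff)

lemma apery_summand: "y + z \<in> apery S \<Longrightarrow> y \<in> S \<Longrightarrow> z \<in> S \<Longrightarrow> y \<in> apery S"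
  using add_mem[of "y - mult S" z] by (auto simp: apery_iff)

lemma apery_subrep:
  assumes x: "x \<in> apery S" and L: "L \<in> reps S x" and le: "\<forall>k\<in>mingens S. L' k \<le> L k"
  shows "(\<Sum>k\<in>mingens S. L' k * k) \<in> apery S"
proof -
  have "(\<Sum>k\<in>mingens S. L k * k) = (\<Sum>k\<in>mingens S. L' k * k + (L k - L' k) * k)"
    using le by (intro sum.cong) (simp_all add: add_mult_distrib[symmetric])
  then have "x = (\<Sum>k\<in>mingens S. L' k * k) + (\<Sum>k\<in>mingens S. (L k - L' k) * k)"
    using L by (simp add: reps_def sum.distrib)
  with x have "(\<Sum>k\<in>mingens S. L' k * k) + (\<Sum>k\<in>mingens S. (L k - L' k) * k) \<in> apery S"
    by simp
  then show ?thesis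
    by (rule apery_summand) (rule sum_mem[OF finite_mingens mingens_subset])+
qed

lemma apery_rep_coeff: "x \<in> apery S \<Longrightarrow> L \<in> reps S x \<Longrightarrow> k \<in> mingens S \<Longrightarrow> L k * k \<in> apery S"
  using apery_subrep[of x L "(\<lambda>_. 0)(k := L k)"] finite_mingens by simp

lemma apery_rep_mult_zero:
  assumes x: "x \<in> apery S" and L: "L \<in> reps S x"
  shows "L (mult S) = 0"
proof (rule ccontr)
  assume "L (mult S) \<noteq> 0"
  moreover have "L (mult S) * mult S \<in> apery S"
    using apery_rep_coeff[OF x L mult_mingens] .
  moreover have "(L (mult S) - 1) * mult S \<in> S"
    using multiple_mem[OF mult_mem] .
  ultimately show False
    by (auto simp: apery_iff diff_mult_distrib)
qed

lemma finite_multiples_in_apery: "0 < g \<Longrightarrow> finite {h. h * g \<in> apery S}"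
  using finite_vimageI[OF finite_apery, of "\<lambda>h. h * g"] by (simp add: inj_on_def vimage_def)

lemma le_alpha: "g \<in> mingens S \<Longrightarrow> h * g \<in> apery S \<Longrightarrow> h \<le> alpha S g"
  unfolding alpha_def using finite_multiples_in_apery mingens_pos by simp

lemma le_beta: "g \<in> mingens S \<Longrightarrow> h * g \<in> apery S \<Longrightarrow> ord S (h * g) = h \<Longrightarrow> h \<le> beta S g"
  unfolding beta_def using finite_multiples_in_apery[OF mingens_pos]
  by (auto intro: Max_ge finite_subset[rotated])

lemma rep_coeff_le_alpha: "x \<in> apery S \<Longrightarrow> L \<in> reps S x \<Longrightarrow> k \<in> mingens S \<Longrightarrow> L k \<le> alpha S k"
  using le_alpha apery_rep_coeff by blast

text \<open>Otherwise exchanging the \<open>U k\<close> copies of \<open>k\<close> for a longer representation of \<open>U k * k\<close>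
  would beat \<open>U\<close>.\<close>
lemma maxrep_coeff_ord:
  assumes x: "x \<in> apery S" and U: "U \<in> maxreps S x" and k: "k \<in> mingens S"
  shows "ord S (U k * k) = U k"
proof (rule antisym[OF _ le_ord_multiple[OF k]])
  have U': "U \<in> reps S x" "(\<Sum>g\<in>mingens S. U g) = ord S x"
    using U by (simp_all add: maxreps_def)
  have "U k * k \<in> S"
    using apery_rep_coeff[OF x U'(1) k] by (simp add: apery_iff)
  then obtain R where R: "R \<in> reps S (U k * k)" "(\<Sum>g\<in>mingens S. R g) = ord S (U k * k)"
    using maxreps_nonempty by (auto simp: maxreps_def)
  note V = rep_exchange[OF U'(1) k order.refl R(1)]
  have "(\<Sum>y\<in>mingens S. R y + (U(k := U k - U k)) y) \<le> ord S x"
    using size_le_ord[OF V(1)] .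
  with V(2) show "ord S (U k * k) \<le> U k"
    using U'(2) R(2) by linarith
qed

lemma maxrep_coeff_le_beta:
  "x \<in> apery S \<Longrightarrow> U \<in> maxreps S x \<Longrightarrow> k \<in> mingens S \<Longrightarrow> U k \<le> beta S k"
  using le_beta maxrep_coeff_ord apery_rep_coeff by (auto simp: maxreps_def)

section \<open>Rectangularity\<close>

abbreviation other_gens :: "nat set" where
  "other_gens \<equiv> mingens S - {mult S}"

lemma corner_rep:
  "(\<lambda>x. if x \<in> other_gens then d x else 0) \<in> reps S (\<Sum>k\<in>other_gens. d k * k)"
  "(\<Sum>x\<in>mingens S. if x \<in> other_gens then d x else 0) = (\<Sum>k\<in>other_gens. d k)"
proof -
  have "(\<Sum>x\<in>mingens S. (if x \<in> other_gens then d x else 0) * x)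
      = (\<Sum>x\<in>mingens S. if x \<in> other_gens then d x * x else 0)"
    by (rule sum.cong) simp_all
  also have "\<dots> = (\<Sum>k\<in>mingens S \<inter> other_gens. d k * k)"
    using finite_mingens by (rule sum.inter_restrict[symmetric])
  finally show "(\<lambda>x. if x \<in> other_gens then d x else 0) \<in> reps S (\<Sum>k\<in>other_gens. d k * k)"
    by (simp add: reps_def Int_absorb1)
  have "(\<Sum>k\<in>mingens S \<inter> other_gens. d k) = (\<Sum>x\<in>mingens S. if x \<in> other_gens then d x else 0)"
    using finite_mingens by (rule sum.inter_restrict)
  then show "(\<Sum>x\<in>mingens S. if x \<in> other_gens then d x else 0) = (\<Sum>k\<in>other_gens. d k)"
    by (simp add: Int_absorb1)
qed

text \<open>The padding argument shared by both implications: \<open>c\<close> is the corner of the box \<open>d\<close>, and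
  \<open>h\<close> of its copies of \<open>g\<close> are traded for \<open>l\<close>.\<close>
lemma corner_exchange:
  fixes d :: "nat \<Rightarrow> nat"
  defines "c \<equiv> \<lambda>x. if x \<in> other_gens then d x else 0"
  assumes g: "g \<in> other_gens" and h: "h \<le> d g" and l: "l \<in> reps S (h * g)"
  shows "(\<lambda>y. l y + (c(g := d g - h)) y) \<in> reps S (\<Sum>k\<in>other_gens. d k * k)"
    and "(\<Sum>y\<in>mingens S. l y + (c(g := d g - h)) y) + h = (\<Sum>y\<in>mingens S. l y) + (\<Sum>k\<in>other_gens. d k)"
    and "(\<Sum>k\<in>other_gens. d k * k) \<in> apery S \<Longrightarrow> \<forall>x\<in>other_gens. l x + (c(g := d g - h)) x \<le> d x
          \<Longrightarrow> (\<forall>x. x \<noteq> g \<longrightarrow> l x = 0) \<and> l g \<le> h"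
proof -
  have gM: "g \<in> mingens S" and cg: "c g = d g"
    using g by (simp_all add: c_def)
  note ex = rep_exchange[OF corner_rep(1)[of d, folded c_def] gM, unfolded cg, OF h l]
  show L: "(\<lambda>y. l y + (c(g := d g - h)) y) \<in> reps S (\<Sum>k\<in>other_gens. d k * k)"
    using ex(1) .
  show "(\<Sum>y\<in>mingens S. l y + (c(g := d g - h)) y) + h = (\<Sum>y\<in>mingens S. l y) + (\<Sum>k\<in>other_gens. d k)"
    using ex(2) corner_rep(2)[of d, folded c_def] by simp
  assume W: "(\<Sum>k\<in>other_gens. d k * k) \<in> apery S"
    and bound: "\<forall>x\<in>other_gens. l x + (c(g := d g - h)) x \<le> d x"
  have "l x = 0" if "x \<noteq> g" for x
  proof -
    consider "x \<notin> mingens S" | "x = mult S" | "x \<in> other_gens"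
      by blast
    then show ?thesis
    proof cases
      case 1
      with l show ?thesis by (simp add: reps_def)
    next
      case 2
      with apery_rep_mult_zero[OF W L] show ?thesis by simp
    next
      case 3
      with bound[rule_format, OF 3] that show ?thesis by (simp add: c_def)
    qed
  qed
  moreover have "l g \<le> h"
    using bound[rule_format, OF g] g h by (simp add: c_def)
  ultimately show "(\<forall>x. x \<noteq> g \<longrightarrow> l x = 0) \<and> l g \<le> h"
    by blast
qed

lemma beta_eq_alpha:
  assumes rect: "rectangular alpha S" and g: "g \<in> other_gens"
  shows "beta S g = alpha S g"
proof -
  have W: "(\<Sum>k\<in>other_gens. alpha S k * k) \<in> apery S"
    using rect corner_in_box by (simp add: rectangular_iff_box)
  have "ord S (h * g) = h" if hg: "h * g \<in> apery S" for h
  proof -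
    have gM: "g \<in> mingens S"
      using g by simp
    have h: "h \<le> alpha S g"
      using le_alpha g hg by simp
    obtain l where l: "l \<in> reps S (h * g)" "(\<Sum>x\<in>mingens S. l x) = ord S (h * g)"
      using maxreps_nonempty hg by (auto simp: apery_iff maxreps_def)
    note L = corner_exchange[where d = "alpha S", OF g h l(1)]
    have "(\<forall>x. x \<noteq> g \<longrightarrow> l x = 0) \<and> l g \<le> h"
      by (rule L(3)[OF W]) (use rep_coeff_le_alpha[OF W L(1)] in blast)
    then have "ord S (h * g) = l g" "l g \<le> h"
      using l(2) sum_eq_single_support[OF finite_mingens gM, of l] by simp_all
    then have "ord S (h * g) \<le> h"
      by simp
    with le_ord_multiple g show ?thesis
      by (simp add: antisym)
  qed
  then have "{h. h * g \<in> apery S \<and> ord S (h * g) = h} = {h. h * g \<in> apery S}"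
    by blast
  then show ?thesis
    by (simp add: alpha_def beta_def)
qed

lemma finite_beta_set: "g \<in> mingens S \<Longrightarrow> finite {h. h * g \<in> apery S \<and> ord S (h * g) = h}"
  using finite_multiples_in_apery[OF mingens_pos] by (auto intro: finite_subset[rotated])

lemma ord_zero: "ord S 0 = 0"
  by (simp add: ord_def reps_zero)

lemma beta_attained: "g \<in> mingens S \<Longrightarrow> beta S g * g \<in> apery S \<and> ord S (beta S g * g) = beta S g"
proof -
  assume g: "g \<in> mingens S"
  have "0 \<in> {h. h * g \<in> apery S \<and> ord S (h * g) = h}"
    using zero_mem mult_pos ord_zero by (simp add: apery_iff)
  then have "beta S g \<in> {h. h * g \<in> apery S \<and> ord S (h * g) = h}"
    unfolding beta_def using finite_beta_set[OF g] Max_in by blast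
  then show ?thesis
    by simp
qed

lemma ord_beta_corner:
  assumes rect: "rectangular beta S"
  shows "ord S (\<Sum>k\<in>other_gens. beta S k * k) = (\<Sum>k\<in>other_gens. beta S k)"
proof (rule antisym)
  have W: "(\<Sum>k\<in>other_gens. beta S k * k) \<in> apery S"
    using rect corner_in_box by (simp add: rectangular_iff_box)
  obtain U where U: "U \<in> maxreps S (\<Sum>k\<in>other_gens. beta S k * k)"
    using maxreps_nonempty W by (auto simp: apery_iff)
  then have "U (mult S) = 0"
    using apery_rep_mult_zero[OF W] by (simp add: maxreps_def)
  then have "ord S (\<Sum>k\<in>other_gens. beta S k * k) = (\<Sum>k\<in>other_gens. U k)"
    using U sum.remove[OF finite_mingens mult_mingens, of U] by (simp add: maxreps_def)
  also have "\<dots> \<le> (\<Sum>k\<in>other_gens. beta S k)"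
    using maxrep_coeff_le_beta[OF W U] by (intro sum_mono) simp
  finally show "ord S (\<Sum>k\<in>other_gens. beta S k * k) \<le> (\<Sum>k\<in>other_gens. beta S k)" .
  show "(\<Sum>k\<in>other_gens. beta S k) \<le> ord S (\<Sum>k\<in>other_gens. beta S k * k)"
    using size_le_ord[OF corner_rep(1)] corner_rep(2) by simp
qed

lemma maxreps_beta_multiple:
  assumes rect: "rectangular beta S" and g: "g \<in> other_gens"
  shows "maxreps S (beta S g * g) = {(\<lambda>_. 0)(g := beta S g)}"
proof (intro equalityI subsetI)
  define W where "W = (\<Sum>k\<in>other_gens. beta S k * k)"
  have W: "W \<in> apery S"
    using rect corner_in_box by (simp add: rectangular_iff_box W_def)
  have gM: "g \<in> mingens S"
    using g by simp
  fix l assume "l \<in> maxreps S (beta S g * g)"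
  then have l: "l \<in> reps S (beta S g * g)" "(\<Sum>x\<in>mingens S. l x) = beta S g"
    using beta_attained[OF gM] by (simp_all add: maxreps_def)
  note L = corner_exchange[where d = "beta S", OF g order.refl l(1)]
  have "(\<lambda>y. l y + ((\<lambda>x. if x \<in> other_gens then beta S x else 0)(g := beta S g - beta S g)) y)
      \<in> maxreps S W"
    using L(1,2) l(2) ord_beta_corner[OF rect] by (simp add: maxreps_def W_def)
  then have "\<forall>x\<in>other_gens.
      l x + ((\<lambda>x. if x \<in> other_gens then beta S x else 0)(g := beta S g - beta S g)) x \<le> beta S x"
    using maxrep_coeff_le_beta[OF W] by blast
  then have supp: "\<forall>x. x \<noteq> g \<longrightarrow> l x = 0"
    using L(3)[OF W[unfolded W_def]] by blast
  then have "l g = beta S g"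
    using l(2) sum_eq_single_support[OF finite_mingens gM, of l] by simp
  with supp show "l \<in> {(\<lambda>_. 0)(g := beta S g)}"
    by auto
next
  fix l assume "l \<in> {(\<lambda>_. 0)(g := beta S g)}"
  then show "l \<in> maxreps S (beta S g * g)"
    using single_rep[of g "beta S g"] finite_mingens g beta_attained[of g] by (simp add: maxreps_def)
qed

lemma gamma_eq_beta:
  assumes rect: "rectangular beta S" and g: "g \<in> other_gens"
  shows "gamma S g = beta S g"
proof -
  have gM: "g \<in> mingens S"
    using g by simp
  then have "beta S g \<in> {h. h * g \<in> apery S \<and> ord S (h * g) = h \<and> (\<exists>!l. l \<in> maxreps S (h * g))}"
    using beta_attained maxreps_beta_multiple[OF rect g] by simp
  then show ?thesis
    unfolding gamma_def using finite_beta_set[OF gM] le_beta[OF gM]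
    by (intro Max_eqI) (auto intro: finite_subset[rotated])
qed

lemma beta_eqI:
  "g \<in> mingens S \<Longrightarrow> h * g \<in> apery S \<Longrightarrow> ord S (h * g) = h
    \<Longrightarrow> (\<And>h'. h' * g \<in> apery S \<Longrightarrow> ord S (h' * g) = h' \<Longrightarrow> h' \<le> h) \<Longrightarrow> beta S g = h"
  unfolding beta_def using finite_beta_set by (intro Max_eqI) auto

lemma gamma_eqI:
  "g \<in> mingens S \<Longrightarrow> h * g \<in> apery S \<Longrightarrow> ord S (h * g) = h \<Longrightarrow> \<exists>!l. l \<in> maxreps S (h * g)
    \<Longrightarrow> (\<And>h'. h' * g \<in> apery S \<Longrightarrow> ord S (h' * g) = h' \<Longrightarrow> \<exists>!l. l \<in> maxreps S (h' * g) \<Longrightarrow> h' \<le> h)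
    \<Longrightarrow> gamma S g = h"
  unfolding gamma_def using finite_beta_set
  by (intro Max_eqI) (auto intro: finite_subset[rotated])

lemma not_rectangular_if_corner_not_in_apery:
  assumes "\<And>g. g \<in> other_gens \<Longrightarrow> b g \<le> \<delta> S g" "(\<Sum>g\<in>other_gens. b g * g) \<notin> apery S"
  shows "\<not> rectangular \<delta> S"
  using box_mono[where G = other_gens and b = b and b' = "\<delta> S"] corner_in_box[where G = other_gens and b = b] assms
  by (auto simp: rectangular_iff_box)

lemma rectangular_beta_if_alpha: "rectangular alpha S \<Longrightarrow> rectangular beta S"
  using box_cong[of other_gens "beta S" "alpha S"] beta_eq_alpha by (simp add: rectangular_iff_box)

lemma rectangular_gamma_if_beta: "rectangular beta S \<Longrightarrow> rectangular gamma S"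
  using box_cong[of other_gens "gamma S" "beta S"] gamma_eq_beta by (simp add: rectangular_iff_box)

end

section \<open>Semigroups given by generators\<close>

lemma gen_zero: "0 \<in> gen A"
  unfolding gen_def by (auto intro: exI[of _ "\<lambda>_. 0"])

lemma gen_add: "x \<in> gen A \<Longrightarrow> y \<in> gen A \<Longrightarrow> x + y \<in> gen A"
proof -
  assume "x \<in> gen A" "y \<in> gen A"
  then obtain l l' where "x = (\<Sum>a\<in>A. l a * a)" "y = (\<Sum>a\<in>A. l' a * a)"
    by (auto simp: gen_def)
  then have "x + y = (\<Sum>a\<in>A. (l a + l' a) * a)"
    by (simp add: add_mult_distrib sum.distrib)
  then show ?thesis
    by (auto simp: gen_def)
qed

lemma gen_generator: "finite A \<Longrightarrow> a \<in> A \<Longrightarrow> a \<in> gen A"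
  using sum_single_coeff[of A a 1] unfolding gen_def by (intro CollectI exI[of _ "(\<lambda>_. 0)(a := 1)"]) simp

text \<open>Used as a rewrite rule, this decides membership of numerals in \<open>gen A\<close>
  for an explicit finite set \<open>A\<close> of positive numerals.\<close>
lemma gen_iff:
  assumes A: "finite A" and x: "0 < x"
  shows "x \<in> gen A \<longleftrightarrow> (\<exists>a\<in>A. a \<le> x \<and> x - a \<in> gen A)"
proof
  assume "x \<in> gen A"
  then obtain l where l: "x = (\<Sum>a\<in>A. l a * a)"
    by (auto simp: gen_def)
  have "(\<Sum>a\<in>A. l a * a) \<noteq> 0"
    using x l by simp
  then obtain a where a: "a \<in> A" "l a * a \<noteq> 0"
    by (rule sum.not_neutral_contains_not_neutral)
  then have "(\<Sum>b\<in>A. (l(a := l a - 1)) b * b) + a = x"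
    using sum_update_diff[where l = l and h = 1 and w = "\<lambda>b. b", OF A a(1)] l by simp
  then have "a \<le> x \<and> x - a \<in> gen A"
    by (auto simp: gen_def)
  with a show "\<exists>a\<in>A. a \<le> x \<and> x - a \<in> gen A"
    by blast
next
  assume "\<exists>a\<in>A. a \<le> x \<and> x - a \<in> gen A"
  then obtain a where "a \<in> A" "a \<le> x" "x - a \<in> gen A"
    by blast
  then show "x \<in> gen A"
    using gen_add[OF gen_generator[OF A]] by fastforce
qed

lemma gen_ge_if_interval:
  assumes A: "finite A" "a \<in> A" "0 < a" and interval: "\<forall>x\<in>{c..<c + a}. x \<in> gen A"
  shows "c \<le> x \<Longrightarrow> x \<in> gen A"
proof (induction x rule: less_induct)
  case (less x)
  show ?case
  proof (cases "x < c + a")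
    case False
    then have "x - a \<in> gen A"
      using less A(3) by simp
    then show ?thesis
      using gen_add[OF gen_generator[OF A(1,2)]] False by fastforce
  qed (use less.prems interval in auto)
qed

lemma numerical_semigroup_gen:
  assumes "\<forall>x\<ge>c. x \<in> gen A"
  shows "numerical_semigroup (gen A)"
proof -
  have "UNIV - gen A \<subseteq> {..<c}"
    using assms not_le by auto
  then have "finite (UNIV - gen A)"
    using finite_subset by blast
  then show ?thesis
    unfolding numerical_semigroup_def using gen_zero gen_add by blast
qed

lemma mingens_gen:
  assumes A: "finite A" "0 \<notin> A" and small: "\<forall>a\<in>A. \<forall>b\<in>A. \<forall>c\<in>A. a < b + c"
  shows "mingens (gen A) = A"
proof (intro equalityI subsetI)
  fix x assume x: "x \<in> mingens (gen A)"
  then have "0 < x" "x \<in> gen A"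
    by (simp_all add: mingens_def)
  then obtain a where a: "a \<in> A" "a \<le> x" "x - a \<in> gen A"
    using gen_iff[OF A(1)] by blast
  have a_gen: "a \<in> gen A" "a \<noteq> 0"
    using gen_generator[OF A(1) a(1)] a(1) A(2) by (auto intro: gr0I)
  have "\<not> (\<exists>u\<in>gen A. \<exists>v\<in>gen A. u \<noteq> 0 \<and> v \<noteq> 0 \<and> x = u + v)"
    using x by (simp only: mingens_def mem_Collect_eq not_False_eq_True)
  then have "\<not> (a \<noteq> 0 \<and> x - a \<noteq> 0 \<and> x = a + (x - a))"
    using a_gen(1) a(3) by blast
  then have "x - a = 0"
    using a(2) a_gen(2) by simp
  with a show "x \<in> A"
    by simp
next
  fix a assume a: "a \<in> A"
  have lower: "\<exists>b\<in>A. b \<le> y" if "y \<in> gen A" "y \<noteq> 0" for y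
    using that gen_iff[OF A(1), of y] by auto
  have "\<not> (\<exists>y\<in>gen A. \<exists>z\<in>gen A. y \<noteq> 0 \<and> z \<noteq> 0 \<and> a = y + z)"
  proof
    assume "\<exists>y\<in>gen A. \<exists>z\<in>gen A. y \<noteq> 0 \<and> z \<noteq> 0 \<and> a = y + z"
    then obtain y z where yz: "y \<in> gen A" "z \<in> gen A" "y \<noteq> 0" "z \<noteq> 0" "a = y + z"
      by blast
    obtain b c where bc: "b \<in> A" "b \<le> y" "c \<in> A" "c \<le> z"
      using lower[OF yz(1,3)] lower[OF yz(2,4)] by blast
    have "a < b + c"
      using small a bc(1,3) by blast
    with bc(2,4) yz(5) show False
      by simp
  qed
  moreover have "a \<in> gen A" "a \<noteq> 0"
    using gen_generator[OF A(1) a] a A(2) by (auto intro: gr0I)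
  ultimately show "a \<in> mingens (gen A)"
    by (simp add: mingens_def)
qed

section \<open>The examples\<close>

lemma gen_8_10_15_ge: "38 \<le> x \<Longrightarrow> x \<in> gen {8, 10, 15}"
  by (rule gen_ge_if_interval[of _ 8]) (simp_all add: atLeastLessThan_upt upt_rec gen_iff gen_zero)

lemma numerical_semigroup_gen_8_10_15: "numerical_semigroup (gen {8, 10, 15})"
  using gen_8_10_15_ge by (intro numerical_semigroup_gen) blast

interpretation S1: num_semigroup "gen {8, 10, 15}"
  by standard (rule numerical_semigroup_gen_8_10_15)

lemma mingens_gen_8_10_15: "mingens (gen {8, 10, 15}) = {8, 10, 15}"
  by (rule mingens_gen) auto

lemma mult_gen_8_10_15: "mult (gen {8, 10, 15}) = 8"
  by (simp add: mult_def mingens_gen_8_10_15)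

lemma apery_gen_8_10_15: "apery (gen {8, 10, 15}) = {0, 10, 15, 20, 25, 30, 35, 45}"
  using gen_8_10_15_ge
  by (intro S1.apery_eqI[of 38])
    (simp_all add: mult_gen_8_10_15 lessThan_nat_numeral gen_iff gen_zero)

lemma ord_gen_8_10_15_30: "ord (gen {8, 10, 15}) 30 = 3"
proof (rule antisym)
  have "ord (gen {8, 10, 15}) 30 * 8 \<le> 30"
    using S1.ord_times_mult_le[of 30] by (simp add: mult_gen_8_10_15 gen_iff gen_zero)
  then show "ord (gen {8, 10, 15}) 30 \<le> 3"
    by simp
  show "3 \<le> ord (gen {8, 10, 15}) 30"
    using S1.le_ord_multiple[of 10 3] by (simp add: mingens_gen_8_10_15)
qed

lemma ord_gen_8_10_15_45: "4 \<le> ord (gen {8, 10, 15}) 45"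
proof -
  have "(\<lambda>_. 0)(10 := 3, 15 := 1) \<in> reps (gen {8, 10, 15}) 45"
    by (simp add: reps_def mingens_gen_8_10_15)
  from S1.size_le_ord[OF this] show ?thesis
    by (simp add: mingens_gen_8_10_15)
qed

lemma beta_gen_8_10_15: "beta (gen {8, 10, 15}) 10 = 3" "beta (gen {8, 10, 15}) 15 = 1"
proof -
  show "beta (gen {8, 10, 15}) 10 = 3"
  proof (rule S1.beta_eqI)
    fix h assume "h * 10 \<in> apery (gen {8, 10, 15})"
    then show "h \<le> 3"
      by (auto simp: apery_gen_8_10_15; presburger)
  qed (simp_all add: mingens_gen_8_10_15 apery_gen_8_10_15 ord_gen_8_10_15_30)
  show "beta (gen {8, 10, 15}) 15 = 1"
  proof (rule S1.beta_eqI)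
    fix h assume h: "h * 15 \<in> apery (gen {8, 10, 15})" "ord (gen {8, 10, 15}) (h * 15) = h"
    then have "h \<in> {0, 1, 2, 3}"
      by (auto simp: apery_gen_8_10_15; presburger)
    with h(2) show "h \<le> 1"
      using ord_gen_8_10_15_30 ord_gen_8_10_15_45 by auto
  qed (simp_all add: mingens_gen_8_10_15 apery_gen_8_10_15 S1.ord_mingens)
qed

lemma rectangular_beta_gen_8_10_15: "rectangular beta (gen {8, 10, 15})"
  by (simp add: rectangular_iff_box mingens_gen_8_10_15 mult_gen_8_10_15 apery_gen_8_10_15
      beta_gen_8_10_15 box_insert box_empty atMost_nat_numeral atMost_Suc insert_commute)

lemma not_rectangular_alpha_gen_8_10_15: "\<not> rectangular alpha (gen {8, 10, 15})"
proof (rule S1.not_rectangular_if_corner_not_in_apery[where b = "(\<lambda>_. 0)(10 := 1, 15 := 2)"])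
  fix g assume "g \<in> mingens (gen {8, 10, 15}) - {mult (gen {8, 10, 15})}"
  then show "((\<lambda>_. 0)(10 := 1, 15 := 2)) g \<le> alpha (gen {8, 10, 15}) g"
    using S1.le_alpha[of 10 1] S1.le_alpha[of 15 2]
    by (auto simp: mingens_gen_8_10_15 mult_gen_8_10_15 apery_gen_8_10_15)
qed (simp add: mingens_gen_8_10_15 mult_gen_8_10_15 apery_gen_8_10_15)

lemma gen_8_10_11_12_ge: "26 \<le> x \<Longrightarrow> x \<in> gen {8, 10, 11, 12}"
  by (rule gen_ge_if_interval[of _ 8]) (simp_all add: atLeastLessThan_upt upt_rec gen_iff gen_zero)

lemma numerical_semigroup_gen_8_10_11_12: "numerical_semigroup (gen {8, 10, 11, 12})"
  using gen_8_10_11_12_ge by (intro numerical_semigroup_gen) blast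

interpretation S2: num_semigroup "gen {8, 10, 11, 12}"
  by standard (rule numerical_semigroup_gen_8_10_11_12)

lemma mingens_gen_8_10_11_12: "mingens (gen {8, 10, 11, 12}) = {8, 10, 11, 12}"
  by (rule mingens_gen) auto

lemma mult_gen_8_10_11_12: "mult (gen {8, 10, 11, 12}) = 8"
  by (simp add: mult_def mingens_gen_8_10_11_12)

lemma apery_gen_8_10_11_12: "apery (gen {8, 10, 11, 12}) = {0, 10, 11, 12, 21, 22, 23, 33}"
  using gen_8_10_11_12_ge
  by (intro S2.apery_eqI[of 26])
    (simp_all add: mult_gen_8_10_11_12 lessThan_nat_numeral gen_iff gen_zero)

lemma ord_gen_8_10_11_12_33: "ord (gen {8, 10, 11, 12}) 33 = 3"
proof (rule antisym)
  have ap: "33 \<in> apery (gen {8, 10, 11, 12})"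
    by (simp add: apery_gen_8_10_11_12)
  have "10 \<le> g" if "l \<in> reps (gen {8, 10, 11, 12}) 33" "g \<in> mingens (gen {8, 10, 11, 12})" "0 < l g" for l g
    using S2.apery_rep_mult_zero[OF ap that(1)] that(2,3) by (auto simp: mingens_gen_8_10_11_12 mult_gen_8_10_11_12)
  then have "ord (gen {8, 10, 11, 12}) 33 * 10 \<le> 33"
    using ap by (intro S2.ord_times_le) (simp_all add: apery_iff)
  then show "ord (gen {8, 10, 11, 12}) 33 \<le> 3"
    by simp
  show "3 \<le> ord (gen {8, 10, 11, 12}) 33"
    using S2.le_ord_multiple[of 11 3] by (simp add: mingens_gen_8_10_11_12)
qed

text \<open>Both \<open>22 = 2 * 11 = 10 + 12\<close> and \<open>33 = 3 * 11 = 10 + 11 + 12\<close> have two maximal representations.\<close>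
lemma gamma_gen_8_10_11_12: "g \<in> {10, 11, 12} \<Longrightarrow> gamma (gen {8, 10, 11, 12}) g = 1"
proof (rule S2.gamma_eqI)
  assume g: "g \<in> {10, 11, 12}"
  then show gM: "g \<in> mingens (gen {8, 10, 11, 12})" and "1 * g \<in> apery (gen {8, 10, 11, 12})"
    by (auto simp: mingens_gen_8_10_11_12 apery_gen_8_10_11_12)
  show "ord (gen {8, 10, 11, 12}) (1 * g) = 1" "\<exists>!l. l \<in> maxreps (gen {8, 10, 11, 12}) (1 * g)"
    using S2.ord_mingens[OF gM] S2.maxreps_mingens[OF gM] by simp_all
  fix h assume h: "h * g \<in> apery (gen {8, 10, 11, 12})" "ord (gen {8, 10, 11, 12}) (h * g) = h"
    "\<exists>!l. l \<in> maxreps (gen {8, 10, 11, 12}) (h * g)"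
  have "h * 10 \<le> h * g" "h * g \<le> 33"
    using g h(1) by (auto simp: apery_gen_8_10_11_12)
  then have "h \<le> 3"
    by linarith
  then have "h \<in> {0, 1, 2, 3}"
    by auto
  then consider "h \<le> 1" | "g = 11" "h = 2" | "g = 11" "h = 3"
    using g h(1) by (auto simp: apery_gen_8_10_11_12)
  then show "h \<le> 1"
  proof cases
    case 2
    let ?l1 = "(\<lambda>_. 0)(11 := 2) :: nat \<Rightarrow> nat" and ?l2 = "(\<lambda>_. 0)(10 := 1, 12 := 1) :: nat \<Rightarrow> nat"
    have "?l1 \<in> maxreps (gen {8, 10, 11, 12}) 22" "?l2 \<in> maxreps (gen {8, 10, 11, 12}) 22"
      using h(2) 2 by (simp_all add: maxreps_def reps_def mingens_gen_8_10_11_12)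
    moreover have "?l1 \<noteq> ?l2"
      by (auto simp: fun_eq_iff)
    ultimately show ?thesis
      using h(3) 2 by auto
  next
    case 3
    let ?l1 = "(\<lambda>_. 0)(11 := 3) :: nat \<Rightarrow> nat" and ?l2 = "(\<lambda>_. 0)(10 := 1, 11 := 1, 12 := 1) :: nat \<Rightarrow> nat"
    have "?l1 \<in> maxreps (gen {8, 10, 11, 12}) 33" "?l2 \<in> maxreps (gen {8, 10, 11, 12}) 33"
      using h(2) 3 by (simp_all add: maxreps_def reps_def mingens_gen_8_10_11_12)
    moreover have "?l1 \<noteq> ?l2"
      by (auto simp: fun_eq_iff)
    ultimately show ?thesis
      using h(3) 3 by auto
  qed
qed

lemma rectangular_gamma_gen_8_10_11_12: "rectangular gamma (gen {8, 10, 11, 12})"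
proof -
  have G: "mingens (gen {8, 10, 11, 12}) - {mult (gen {8, 10, 11, 12})} = {10, 11, 12}"
    by (auto simp: mingens_gen_8_10_11_12 mult_gen_8_10_11_12)
  have "box {10, 11, 12} (gamma (gen {8, 10, 11, 12})) = box {10, 11, 12} (\<lambda>_. 1)"
    using gamma_gen_8_10_11_12 by (intro box_cong) simp
  also have "\<dots> = apery (gen {8, 10, 11, 12})"
    unfolding apery_gen_8_10_11_12 by (simp add: box_insert box_empty atMost_Suc insert_commute)
  finally show ?thesis
    unfolding rectangular_iff_box G by simp
qed

lemma not_rectangular_beta_gen_8_10_11_12: "\<not> rectangular beta (gen {8, 10, 11, 12})"
proof (rule S2.not_rectangular_if_corner_not_in_apery[where b = "(\<lambda>_. 0)(10 := 1, 11 := 3)"])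
  fix g assume "g \<in> mingens (gen {8, 10, 11, 12}) - {mult (gen {8, 10, 11, 12})}"
  then show "((\<lambda>_. 0)(10 := 1, 11 := 3)) g \<le> beta (gen {8, 10, 11, 12}) g"
    using S2.le_beta[of 10 1] S2.le_beta[of 11 3] S2.ord_mingens[of 10] ord_gen_8_10_11_12_33
    by (auto simp: mingens_gen_8_10_11_12 mult_gen_8_10_11_12 apery_gen_8_10_11_12)
qed (simp add: mingens_gen_8_10_11_12 mult_gen_8_10_11_12 apery_gen_8_10_11_12)

theorem mainTheorem6:
  shows "(\<forall>S. numerical_semigroup S \<longrightarrow>
            (rectangular alpha S \<longrightarrow> rectangular beta S) \<and>
            (rectangular beta S \<longrightarrow> rectangular gamma S))
       \<and> numerical_semigroup (gen {8, 10, 15})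
       \<and> rectangular beta (gen {8, 10, 15}) \<and> \<not> rectangular alpha (gen {8, 10, 15})
       \<and> numerical_semigroup (gen {8, 10, 11, 12})
       \<and> rectangular gamma (gen {8, 10, 11, 12}) \<and> \<not> rectangular beta (gen {8, 10, 11, 12})"
  using num_semigroup.rectangular_beta_if_alpha num_semigroup.rectangular_gamma_if_beta
    num_semigroup.intro numerical_semigroup_gen_8_10_15 rectangular_beta_gen_8_10_15
    not_rectangular_alpha_gen_8_10_15 numerical_semigroup_gen_8_10_11_12
    rectangular_gamma_gen_8_10_11_12 not_rectangular_beta_gen_8_10_11_12
  by blast

end
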